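(* Let $n\ge2$ and let $r_1,\dots,r_N$, $N=3\cdot4^{n-1}$, be the vertices of the Koch snowflake $S_n$ (indices modulo $N$). Then: (i) the sharp points of $S_n$ are exactly the vertices $r_m$ with $m=4^{l}(4k-2)+1$ for $l\in\{0,1,\dots,n-2\}$, $k\in\{1,2,\dots,3\cdot4^{\,n-2-l}\}$, or $m=4^{n-1}(k-1)+1$ for $k\in\{1,2,3\}$; (ii) for the snowflake code $u_n=c_1\cdots c_{6\cdot4^{n-2}}$ and for $S_n$ or any image of $S_n$ under an invertible affine map: if $c_j=1$ then $\kappa_{2j-2}=\kappa_{2j-1}=-1$, $\bar\kappa_{2j-2}=-1$, $\bar\kappa_{2j-1}=1$; if $c_j=0$ then $\kappa_{2j-2}=\kappa_{2j-1}=\bar\kappa_{2j-2}=\bar\kappa_{2j-1}=1$; (iii) $u_2=111111$, and if $u_n=c_1c_2\cdots c_m$ then $u_{n+1}=c_1\,101\,c_2\,101\cdots c_m\,101$ (each letter of $u_n$ followed by the word $101$); in particular $u_3=(1101)^6$ and $u_n$ has $6\cdot4^{n-2}$ letters.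
   Context: Let $R_\theta$ denote counterclockwise rotation of $\mathbb R^2$ by the angle $\theta$. Let $v_1,v_2,v_3$ be the vertices of an equilateral triangle in counterclockwise order. The Koch snowflake at step $n$ is the closed polygon $S_n$ with vertices $r_1,\dots,r_{3\cdot4^{n-1}}$ (indices taken modulo $3\cdot4^{n-1}$, so $r_0$ is the last vertex), defined recursively: $S_1$ has vertices $v_1,v_2,v_3$; $S_{n+1}$ is obtained from $S_n$ by replacing each edge from $p$ to $q$ (including the closing edge from the last vertex to $r_1$), in cyclic order, by the four edges through $p,\ p+\tfrac13(q-p),\ p+\tfrac13(q-p)+\tfrac13R_{-\pi/3}(q-p),\ p+\tfrac23(q-p),\ q$ (the new tip points outward), and numbering vertices consecutively with $r_1=v_1$. A vertex $r_i$ is a sharp point if the angle $\angle r_{i-1}r_ir_{i+1}$ equals $\pi/3$. For $n\ge2$ the snowflake code is the word $u_n=c_1\cdots c_{6\cdot4^{n-2}}$ over $\{0,1\}$ with $c_j=1$ iff $r_{2j-1}$ is a sharp point (the letter $c_j$ refers to the pair $\{r_{2j-2},r_{2j-1}\}$). Affine curvatures of a closed polygon with vertices $r_1,\dots,r_N$ (indices mod $N$): $t_k=r_{k+1}-r_k$, $[a,b]=a_1b_2-a_2b_1$, and whenever $[t_{k-1},t_k]\ne0$, $\kappa_k=\dfrac{[t_k,t_{k+1}]}{[t_{k-1},t_k]}$, $\bar\kappa_k=\dfrac{[t_{k-1},t_{k+1}]}{[t_{k-1},t_k]}$. *)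

theory Defs
  imports "HOL-Analysis.Analysis"
begin

text \<open>The plane R^2 is identified with the complex numbers (x,y) <-> x + i y.
  Counterclockwise rotation R_theta is multiplication by cis theta.\<close>

definition rot :: "real \<Rightarrow> complex \<Rightarrow> complex" where
  "rot \<theta> z = cis \<theta> * z"

definition det2 :: "complex \<Rightarrow> complex \<Rightarrow> real" where
  "det2 a b = Re a * Im b - Im a * Re b"

definition angle3 :: "complex \<Rightarrow> complex \<Rightarrow> complex \<Rightarrow> real" where
  "angle3 a b c = arccos (((a - b) \<bullet> (c - b)) / (norm (a - b) * norm (c - b)))"

definition equilateral_ccw :: "complex \<Rightarrow> complex \<Rightarrow> complex \<Rightarrow> bool" where
  "equilateral_ccw v1 v2 v3 \<longleftrightarrow> v1 \<noteq> v2 \<and> dist v1 v2 = dist v2 v3 \<and> dist v2 v3 = dist v3 v1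
     \<and> det2 (v2 - v1) (v3 - v1) > 0"

text \<open>Replace the edge p -> q by p, p+(q-p)/3, p+(q-p)/3+R_{-pi/3}((q-p)/3), p+2(q-p)/3
  (q is the first vertex of the next edge).\<close>
definition koch_edge :: "complex \<Rightarrow> complex \<Rightarrow> complex list" where
  "koch_edge p q = [p, p + (q - p) / 3, p + (q - p) / 3 + rot (- pi / 3) ((q - p) / 3),
                    p + 2 * (q - p) / 3]"

definition koch_step :: "complex list \<Rightarrow> complex list" where
  "koch_step vs = concat (map (\<lambda>i. koch_edge (vs ! i) (vs ! ((i + 1) mod length vs)))
                                [0..<length vs])"

text \<open>Vertex list r_1, ..., r_N of S_n (the list position i holds r_(i+1)); S_0 := S_1.\<close>
fun koch_list :: "complex \<Rightarrow> complex \<Rightarrow> complex \<Rightarrow> nat \<Rightarrow> complex list" where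
  "koch_list v1 v2 v3 0 = [v1, v2, v3]"
| "koch_list v1 v2 v3 (Suc 0) = [v1, v2, v3]"
| "koch_list v1 v2 v3 (Suc (Suc n)) = koch_step (koch_list v1 v2 v3 (Suc n))"

text \<open>Vertices of a closed polygon given by a list, indexed cyclically by integers, 1-based.\<close>
definition cyc :: "complex list \<Rightarrow> int \<Rightarrow> complex" where
  "cyc vs i = vs ! nat ((i - 1) mod int (length vs))"

definition koch_vertex :: "complex \<Rightarrow> complex \<Rightarrow> complex \<Rightarrow> nat \<Rightarrow> int \<Rightarrow> complex" where
  "koch_vertex v1 v2 v3 n i = cyc (koch_list v1 v2 v3 n) i"

definition sharp :: "complex \<Rightarrow> complex \<Rightarrow> complex \<Rightarrow> nat \<Rightarrow> int \<Rightarrow> bool" where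
  "sharp v1 v2 v3 n i \<longleftrightarrow>
     angle3 (koch_vertex v1 v2 v3 n (i - 1)) (koch_vertex v1 v2 v3 n i)
            (koch_vertex v1 v2 v3 n (i + 1)) = pi / 3"

definition snowflake_code :: "complex \<Rightarrow> complex \<Rightarrow> complex \<Rightarrow> nat \<Rightarrow> nat list" where
  "snowflake_code v1 v2 v3 n =
     map (\<lambda>j. if sharp v1 v2 v3 n (2 * int j - 1) then 1 else 0) [1..<6 * 4 ^ (n - 2) + 1]"

definition tvec :: "(int \<Rightarrow> complex) \<Rightarrow> int \<Rightarrow> complex" where
  "tvec P k = P (k + 1) - P k"

definition kappa :: "(int \<Rightarrow> complex) \<Rightarrow> int \<Rightarrow> real" where
  "kappa P k = det2 (tvec P k) (tvec P (k + 1)) / det2 (tvec P (k - 1)) (tvec P k)"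

definition kappa_bar :: "(int \<Rightarrow> complex) \<Rightarrow> int \<Rightarrow> real" where
  "kappa_bar P k = det2 (tvec P (k - 1)) (tvec P (k + 1)) / det2 (tvec P (k - 1)) (tvec P k)"

definition curv_defined :: "(int \<Rightarrow> complex) \<Rightarrow> int \<Rightarrow> bool" where
  "curv_defined P k \<longleftrightarrow> det2 (tvec P (k - 1)) (tvec P k) \<noteq> 0"

definition inv_affine :: "(complex \<Rightarrow> complex) \<Rightarrow> bool" where
  "inv_affine f \<longleftrightarrow> (\<exists>L c. linear L \<and> bij L \<and> f = (\<lambda>x. L x + c))"

end

theory Submission
  imports Defs
begin

text \<open>Every edge of a snowflake polygon arises from the preceding one by a rotation through
  -\<pi>/3 or through 2\<pi>/3, the latter exactly at the sharp points. Replacing an edge e by four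
  edges gives e/3, \<omega>e/3, (1 - \<omega>)e/3, e/3 with \<omega> = cis (-\<pi>/3): the turn at an old vertex
  survives and the three new vertices turn by -\<pi>/3, 2\<pi>/3, -\<pi>/3. Starting from the three
  2\<pi>/3 turns of the triangle, the turn pattern of S_(d+1) is therefore the d-fold substitution
  b \<mapsto> b F T F, from which the positions of the sharp points and the recursion of the code are
  read off. The affine curvatures are ratios of determinants of consecutive edges: an invertible
  affine map multiplies all of them by the same nonzero determinant, and for consecutive edges
  e, t_a e, t_b t_a e (t_a the rotation of the turn a) they depend only on a and b.\<close>

lemma nth_concat_map_uniform:
  assumes "\<And>x. x \<in> set xs \<Longrightarrow> length (f x) = k" "i < length xs" "r < k"
  shows "concat (map f xs) ! (k * i + r) = f (xs ! i) ! r"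
  using assms
proof (induction xs arbitrary: i)
  case Nil
  then show ?case by simp
next
  case (Cons x xs)
  then show ?case
    by (cases i) (simp_all add: nth_append add.assoc)
qed

lemma length_concat_map_uniform:
  assumes "\<And>x. x \<in> set xs \<Longrightarrow> length (f x) = k"
  shows "length (concat (map f xs)) = k * length xs"
  using assms by (induction xs) auto

lemma Suc_nat_mod_pred:
  assumes "0 < N"
  shows "Suc (nat ((k - 1) mod int N)) mod N = nat (k mod int N)"
proof -
  have "int (Suc (nat ((k - 1) mod int N)) mod N) = ((k - 1) mod int N + 1) mod int N"
    using assms by (simp add: of_nat_mod add.commute)
  also have "\<dots> = k mod int N" by (simp add: mod_add_left_eq)
  finally show ?thesis by (metis nat_int)
qed

lemma odd_nat_mod_even:
  fixes m :: int
  assumes "even N" "0 < N" "odd m"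
  shows "odd (nat (m mod int N))"
proof -
  have "(m mod int N) mod 2 = m mod 2" using assms(1) by (simp add: mod_mod_cancel)
  then have "odd (m mod int N)" using assms(3) by (simp add: odd_iff_mod_2_eq_one)
  then show ?thesis using assms(2) by (simp add: even_nat_iff)
qed

section \<open>Turn patterns\<close>

text \<open>\<open>sharp_flags d ! i\<close> records whether the vertex r_(i+1) of S_(d+1) is sharp
  (see \<open>sharp_iff_sharp_flags\<close>).\<close>

definition refine_flags :: "bool list \<Rightarrow> bool list" where
  "refine_flags fl = concat (map (\<lambda>b. [b, False, True, False]) fl)"

fun sharp_flags :: "nat \<Rightarrow> bool list" where
  "sharp_flags 0 = [True, True, True]"
| "sharp_flags (Suc d) = refine_flags (sharp_flags d)"

lemma length_refine_flags [simp]: "length (refine_flags fl) = 4 * length fl"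
  unfolding refine_flags_def by (rule length_concat_map_uniform) simp

lemma nth_refine_flags:
  assumes "i < length fl" "r < 4"
  shows "refine_flags fl ! (4 * i + r) = (if r = 0 then fl ! i else r = 2)"
proof -
  have "refine_flags fl ! (4 * i + r) = [fl ! i, False, True, False] ! r"
    unfolding refine_flags_def using assms by (intro nth_concat_map_uniform) auto
  also have "\<dots> = (if r = 0 then fl ! i else r = 2)"
    using assms(2) by (auto simp: less_Suc_eq numeral_eq_Suc)
  finally show ?thesis .
qed

lemma length_sharp_flags [simp]: "length (sharp_flags d) = 3 * 4 ^ d"
  by (induction d) auto

lemma refine_flags_odd:
  assumes "x < length (refine_flags fl)" "odd x"
  shows "\<not> refine_flags fl ! x"
proof -
  have "x = 4 * (x div 4) + x mod 4" by simp
  moreover have "x mod 4 \<noteq> 0" "x mod 4 \<noteq> 2" using assms(2) by presburger+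
  ultimately show ?thesis
    using nth_refine_flags[of "x div 4" fl "x mod 4"] assms(1) by auto
qed

lemma ex_power4_times_4k2_mult4_iff:
  fixes i d :: nat
  shows "(\<exists>l<Suc d. \<exists>k. 4 * i = 4 ^ l * (4 * k + 2)) \<longleftrightarrow> (\<exists>l<d. \<exists>k. i = 4 ^ l * (4 * k + 2))"
proof
  assume "\<exists>l<Suc d. \<exists>k. 4 * i = 4 ^ l * (4 * k + 2)"
  then obtain l k where "l < Suc d" "4 * i = 4 ^ l * (4 * k + 2)" by blast
  moreover have "l \<noteq> 0"
    using calculation(2) by (intro notI) (simp, presburger)
  ultimately obtain l' where "l' < d" "i = 4 ^ l' * (4 * k + 2)"
    by (cases l) auto
  then show "\<exists>l<d. \<exists>k. i = 4 ^ l * (4 * k + 2)" by blast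
next
  assume "\<exists>l<d. \<exists>k. i = 4 ^ l * (4 * k + 2)"
  then obtain l k where "l < d" "i = 4 ^ l * (4 * k + 2)" by blast
  then show "\<exists>l<Suc d. \<exists>k. 4 * i = 4 ^ l * (4 * k + 2)"
    by (intro exI[of _ "Suc l"]) auto
qed

lemma sharp_flags_iff:
  "x < 3 * 4 ^ d \<Longrightarrow>
     sharp_flags d ! x \<longleftrightarrow> (\<exists>l<d. \<exists>k. x = 4 ^ l * (4 * k + 2)) \<or> 4 ^ d dvd x"
proof (induction d arbitrary: x)
  case 0
  then show ?case by (auto simp: less_Suc_eq numeral_eq_Suc)
next
  case (Suc d)
  define i r where "i = x div 4" and "r = x mod 4"
  have x: "x = 4 * i + r" and "r < 4" and i: "i < 3 * 4 ^ d"
    using Suc.prems by (auto simp: i_def r_def)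
  have flag: "sharp_flags (Suc d) ! x = (if r = 0 then sharp_flags d ! i else r = 2)"
    using nth_refine_flags[of i "sharp_flags d" r] x \<open>r < 4\<close> i by simp
  have "r = 0 \<or> r = 2 \<or> odd x"
    using \<open>r < 4\<close> x by presburger
  then consider "r = 0" | "r = 2" | "odd x" by blast
  then show ?case
  proof cases
    case 1
    then show ?thesis using flag x Suc.IH[OF i] ex_power4_times_4k2_mult4_iff by simp
  next
    case 2
    then have "x = 4 ^ 0 * (4 * i + 2)" using x by simp
    then have "\<exists>l<Suc d. \<exists>k. x = 4 ^ l * (4 * k + 2)" by blast
    then show ?thesis using flag 2 by simp
  next
    case 3
    have "\<not> 4 ^ Suc d dvd x"
      using 3 by (metis dvd_mult_left dvd_trans even_numeral power_Suc)
    moreover have "\<not> (\<exists>l k. x = 4 ^ l * (4 * k + 2))"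
    proof -
      have "even ((4::nat) ^ l * (4 * k + 2))" for l k by simp
      then show ?thesis using 3 by metis
    qed
    ultimately show ?thesis using flag 3 x by auto
  qed
qed

lemma exists_scaled_4k2_iff:
  fixes x d :: nat
  assumes "x < 3 * 4 ^ Suc d"
  shows "(\<exists>l<Suc d. \<exists>k. x = 4 ^ l * (4 * k + 2)) \<longleftrightarrow>
    (\<exists>l k. l \<le> d \<and> 1 \<le> k \<and> k \<le> 3 * 4 ^ (d - l) \<and> x = 4 ^ l * (4 * k - 2))"
proof
  assume "\<exists>l<Suc d. \<exists>k. x = 4 ^ l * (4 * k + 2)"
  then obtain l k where l: "l < Suc d" and x: "x = 4 ^ l * (4 * k + 2)" by blast
  have "(4::nat) ^ Suc d = 4 ^ l * (4 * 4 ^ (d - l))"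
    using l by (simp flip: power_add power_Suc)
  then have "4 ^ l * (4 * k + 2) < 4 ^ l * (12 * 4 ^ (d - l))" using assms x by simp
  then have "4 * k + 2 < 12 * 4 ^ (d - l)" by (rule mult_less_cancel1[THEN iffD1, THEN conjunct2])
  then have "k + 1 \<le> 3 * 4 ^ (d - l)" by linarith
  then show "\<exists>l k. l \<le> d \<and> 1 \<le> k \<and> k \<le> 3 * 4 ^ (d - l) \<and> x = 4 ^ l * (4 * k - 2)"
    using l x by (intro exI[of _ l] exI[of _ "k + 1"]) auto
next
  assume "\<exists>l k. l \<le> d \<and> 1 \<le> k \<and> k \<le> 3 * 4 ^ (d - l) \<and> x = 4 ^ l * (4 * k - 2)"
  then obtain l k where "l \<le> d" "1 \<le> k" "x = 4 ^ l * (4 * k - 2)" by blast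
  moreover have "4 * k - 2 = 4 * (k - 1) + 2" using \<open>1 \<le> k\<close> by simp
  ultimately show "\<exists>l<Suc d. \<exists>k. x = 4 ^ l * (4 * k + 2)"
    by (intro exI[of _ l] conjI exI[of _ "k - 1"]) auto
qed

lemma power_dvd_iff_small_multiple:
  fixes x D :: nat
  assumes "x < 3 * 4 ^ D"
  shows "4 ^ D dvd x \<longleftrightarrow> (\<exists>k\<in>{1, 2, 3}. x = 4 ^ D * (k - 1))"
proof
  assume "4 ^ D dvd x"
  then obtain c where c: "x = 4 ^ D * c" by blast
  with assms have "c < 3" by simp
  then have "c = 0 \<or> c = 1 \<or> c = 2" by auto
  with c show "\<exists>k\<in>{1, 2, 3}. x = 4 ^ D * (k - 1)" by auto
qed auto

text \<open>The code reads the flags at even positions; those at odd positions are never set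
  (\<open>refine_flags_odd\<close>).\<close>

fun even_letters :: "bool list \<Rightarrow> nat list" where
  "even_letters (a # b # xs) = of_bool a # even_letters xs"
| "even_letters _ = []"

lemma length_even_letters: "length (even_letters xs) = length xs div 2"
  by (induction xs rule: even_letters.induct) auto

lemma nth_even_letters:
  "j < length xs div 2 \<Longrightarrow> even_letters xs ! j = of_bool (xs ! (2 * j))"
  by (induction xs arbitrary: j rule: even_letters.induct) (auto simp: nth_Cons split: nat.split)

lemma even_letters_refine_flags:
  "even_letters (refine_flags fl) = concat (map (\<lambda>b. [of_bool b, 1]) fl)"
  by (induction fl) (simp_all add: refine_flags_def)

lemma even_letters_refine_flags_twice:
  "even_letters (refine_flags (refine_flags fl))
     = concat (map (\<lambda>c. [c, 1, 0, 1]) (even_letters (refine_flags fl)))"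
  unfolding even_letters_refine_flags by (induction fl) (simp_all add: refine_flags_def)

section \<open>Edges of the snowflake\<close>

definition omega :: complex where
  "omega = cis (- pi / 3)"

lemma omega_eq: "omega = Complex (1 / 2) (- sqrt 3 / 2)"
  by (simp add: omega_def cis.ctr cos_60 sin_60)

lemma omega_squared: "omega * omega = omega - 1"
  by (simp add: omega_eq complex_eq_iff field_simps)

lemma rot_minus_pi_third: "rot (- (pi / 3)) z = omega * z"
  by (simp add: rot_def omega_def)

text \<open>\<open>turn True = cis (2\<pi>/3)\<close> is the left turn at a sharp point, \<open>turn False = cis (-\<pi>/3)\<close>
  the right turn at every other vertex.\<close>

definition turn :: "bool \<Rightarrow> complex" where
  "turn b = (if b then - omega else omega)"

lemma norm_turn [simp]: "cmod (turn b) = 1"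
  by (simp add: turn_def omega_eq cmod_def power2_eq_square)

lemma turn_nonzero [simp]: "turn b \<noteq> 0"
  by (metis norm_turn norm_zero zero_neq_one)

lemma Re_turn: "Re (turn b) = (if b then - 1 / 2 else 1 / 2)"
  by (simp add: turn_def omega_eq)

lemma Im_turn: "Im (turn b) = (if b then sqrt 3 / 2 else - sqrt 3 / 2)"
  by (simp add: turn_def omega_eq)

lemma Im_turn_mult: "Im (turn b' * turn b) = (if b = b' then - sqrt 3 / 2 else sqrt 3 / 2)"
  by (auto simp: turn_def omega_eq)

definition edge :: "complex list \<Rightarrow> nat \<Rightarrow> complex" where
  "edge vs i = vs ! ((i + 1) mod length vs) - vs ! i"

text \<open>\<open>fl ! i\<close> is the turn at the vertex \<open>vs ! i\<close>: it maps the incoming edge to the outgoing one.\<close>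

definition turns_by :: "complex list \<Rightarrow> bool list \<Rightarrow> bool" where
  "turns_by vs fl \<longleftrightarrow> length fl = length vs \<and> vs \<noteq> [] \<and>
     (\<forall>i<length vs. edge vs i \<noteq> 0 \<and>
        edge vs ((i + 1) mod length vs) = turn (fl ! ((i + 1) mod length vs)) * edge vs i)"

lemma turns_byD:
  assumes "turns_by vs fl" "i < length vs"
  shows "edge vs i \<noteq> 0"
    and "edge vs ((i + 1) mod length vs) = turn (fl ! ((i + 1) mod length vs)) * edge vs i"
  using assms by (simp_all add: turns_by_def)

definition koch_edge_factor :: "nat \<Rightarrow> complex" where
  "koch_edge_factor r = [1, omega, 1 - omega, 1] ! r"

lemma koch_edge_factor_turn:
  "r < 3 \<Longrightarrow> koch_edge_factor (r + 1) = turn (r = 1) * koch_edge_factor r"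
  by (auto simp: koch_edge_factor_def turn_def less_Suc_eq numeral_eq_Suc algebra_simps omega_squared)

lemma koch_edge_factor_nonzero: "r < 4 \<Longrightarrow> koch_edge_factor r \<noteq> 0"
  by (auto simp: koch_edge_factor_def omega_eq complex_eq_iff less_Suc_eq numeral_eq_Suc)

lemma length_koch_step [simp]: "length (koch_step vs) = 4 * length vs"
  unfolding koch_step_def by (subst length_concat_map_uniform) (auto simp: koch_edge_def)

lemma koch_step_eq_Nil_iff [simp]: "koch_step vs = [] \<longleftrightarrow> vs = []"
  by (simp flip: length_0_conv)

lemma nth_koch_step:
  assumes "i < length vs" "r < 4"
  shows "koch_step vs ! (4 * i + r) = koch_edge (vs ! i) (vs ! ((i + 1) mod length vs)) ! r"
  unfolding koch_step_def using assms
  by (subst nth_concat_map_uniform[where k = 4]) (auto simp: koch_edge_def)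

lemma edge_koch_step:
  assumes "i < length vs" "r < 4"
  shows "edge (koch_step vs) (4 * i + r) = koch_edge_factor r * edge vs i / 3"
proof -
  let ?p = "vs ! i" and ?q = "vs ! ((i + 1) mod length vs)"
  have succ: "koch_step vs ! ((4 * i + r + 1) mod length (koch_step vs))
      = (if r = 3 then ?q else koch_edge ?p ?q ! (r + 1))"
  proof (cases "r = 3")
    case True
    then have "(4 * i + r + 1) mod (4 * length vs) = 4 * ((i + 1) mod length vs) + 0"
      by (simp add: mult_mod_right)
    moreover have "(i + 1) mod length vs < length vs" using assms by (intro mod_less_divisor) linarith
    ultimately show ?thesis
      using nth_koch_step[of "(i + 1) mod length vs" vs 0] True by (simp add: koch_edge_def)
  next
    case False
    then have "(4 * i + r + 1) mod (4 * length vs) = 4 * i + (r + 1)"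
      using assms by simp
    then show ?thesis using nth_koch_step[of i vs "r + 1"] False assms by simp
  qed
  have "r = 0 \<or> r = 1 \<or> r = 2 \<or> r = 3" using assms by auto
  then show ?thesis
    unfolding edge_def succ nth_koch_step[OF assms]
    by (auto simp: koch_edge_def koch_edge_factor_def rot_minus_pi_third field_simps)
qed

lemma edge_koch_step_succ:
  assumes "turns_by vs fl" "j < 4 * length vs"
  shows "edge (koch_step vs) ((j + 1) mod (4 * length vs))
    = turn (refine_flags fl ! ((j + 1) mod (4 * length vs))) * edge (koch_step vs) j"
proof -
  let ?N = "length vs" and ?K = "koch_step vs"
  have N: "length fl = ?N" "0 < ?N" using assms(1) by (auto simp: turns_by_def)
  define i r where "i = j div 4" and "r = j mod 4"
  have j: "j = 4 * i + r" "r < 4" "i < ?N" using assms(2) by (auto simp: i_def r_def)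
  have ej: "edge ?K j = koch_edge_factor r * edge vs i / 3"
    using edge_koch_step[OF j(3,2)] j(1) by simp
  show ?thesis
  proof (cases "r = 3")
    case True
    define i' where "i' = (i + 1) mod ?N"
    have i': "i' < ?N" using N by (simp add: i'_def)
    have succ: "(j + 1) mod (4 * ?N) = 4 * i' + 0" using True j by (simp add: i'_def mult_mod_right)
    have "edge ?K (4 * i') = edge vs i' / 3"
      using edge_koch_step[OF i', of 0] by (simp add: koch_edge_factor_def)
    also have "\<dots> = turn (fl ! i') * (edge vs i / 3)"
      using turns_byD(2)[OF assms(1) j(3)] by (simp add: i'_def)
    also have "edge vs i / 3 = edge ?K j" using ej True by (simp add: koch_edge_factor_def)
    finally show ?thesis using succ nth_refine_flags[of i' fl 0] i' N by simp
  next
    case False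
    then have "(j + 1) mod (4 * ?N) = 4 * i + (r + 1)" using j by simp
    moreover have "edge ?K (4 * i + (r + 1)) = koch_edge_factor (r + 1) * edge vs i / 3"
      using False j by (intro edge_koch_step) auto
    moreover have "\<dots> = turn (r = 1) * edge ?K j"
      using koch_edge_factor_turn[of r] ej False j(2) by simp
    ultimately show ?thesis using nth_refine_flags[of i fl "r + 1"] j N False by simp
  qed
qed

lemma turns_by_koch_step:
  assumes "turns_by vs fl"
  shows "turns_by (koch_step vs) (refine_flags fl)"
proof -
  let ?N = "length vs" and ?K = "koch_step vs"
  have N: "length fl = ?N" "?N \<noteq> 0" using assms by (auto simp: turns_by_def)
  have "edge ?K j \<noteq> 0" if "j < 4 * ?N" for j
  proof -
    have "j mod 4 < 4" "j div 4 < ?N" using that by auto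
    then have "edge ?K j = koch_edge_factor (j mod 4) * edge vs (j div 4) / 3"
      using edge_koch_step[of "j div 4" vs "j mod 4"] by simp
    also have "\<dots> \<noteq> 0"
      using turns_byD(1)[OF assms \<open>j div 4 < ?N\<close>] koch_edge_factor_nonzero[OF \<open>j mod 4 < 4\<close>]
      by simp
    finally show ?thesis .
  qed
  with N edge_koch_step_succ[OF assms] show ?thesis by (simp add: turns_by_def)
qed

lemma det2_mult_right_self: "det2 x (c * x) = (cmod x)\<^sup>2 * Im c"
  by (simp only: cmod_power2) (simp add: det2_def algebra_simps power2_eq_square)

lemma equilateral_apex_eq:
  assumes "cmod z = 1" "cmod (z - 1) = 1" "Im z > 0"
  shows "z = 1 - omega"
proof -
  have "(Re z)\<^sup>2 + (Im z)\<^sup>2 = 1" "(Re z - 1)\<^sup>2 + (Im z)\<^sup>2 = 1"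
    using assms(1,2) cmod_power2[of z] cmod_power2[of "z - 1"] by simp_all
  then have re: "Re z = 1 / 2" by (simp add: power2_eq_square algebra_simps)
  with \<open>(Re z)\<^sup>2 + (Im z)\<^sup>2 = 1\<close> have "(Im z)\<^sup>2 = 3 / 4" by (simp add: power2_eq_square)
  then have "(Im z - sqrt 3 / 2) * (Im z + sqrt 3 / 2) = 0"
    by (simp add: power2_eq_square algebra_simps)
  moreover have "Im z + sqrt 3 / 2 > 0" using assms(3) by (simp add: add_pos_nonneg)
  ultimately have "Im z = sqrt 3 / 2" by simp
  with re show ?thesis by (simp add: omega_eq complex_eq_iff)
qed

lemma equilateral_ccw_third_vertex:
  assumes "equilateral_ccw v1 v2 v3"
  shows "v3 - v1 = (1 - omega) * (v2 - v1)" and "v2 \<noteq> v1"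
proof -
  define d z where "d = v2 - v1" and "z = (v3 - v1) / d"
  have "d \<noteq> 0" using assms by (auto simp: equilateral_ccw_def d_def)
  then have v3: "v3 - v1 = z * d" by (simp add: z_def)
  then have v32: "v3 - v2 = (z - 1) * d" by (simp add: d_def algebra_simps)
  have "dist v1 v2 = dist v3 v1" "dist v1 v2 = dist v2 v3"
    using assms by (simp_all add: equilateral_ccw_def)
  then have "cmod (v3 - v1) = cmod d" "cmod (v3 - v2) = cmod d"
    by (simp_all add: dist_norm d_def norm_minus_commute)
  moreover have "cmod (v3 - v1) = cmod z * cmod d" "cmod (v3 - v2) = cmod (z - 1) * cmod d"
    by (simp_all only: v3 v32 norm_mult)
  ultimately have "cmod z = 1" "cmod (z - 1) = 1"
    using \<open>d \<noteq> 0\<close> by simp_all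
  moreover have "det2 d (v3 - v1) > 0"
    using assms by (simp add: equilateral_ccw_def d_def)
  then have "(cmod d)\<^sup>2 * Im z > 0" by (simp add: v3 det2_mult_right_self)
  then have "Im z > 0" by (simp add: zero_less_mult_iff)
  ultimately have "z = 1 - omega" by (rule equilateral_apex_eq)
  with v3 show "v3 - v1 = (1 - omega) * (v2 - v1)" by (simp add: d_def)
  show "v2 \<noteq> v1" using \<open>d \<noteq> 0\<close> d_def by simp
qed

lemma turns_by_equilateral:
  assumes "equilateral_ccw v1 v2 v3"
  shows "turns_by [v1, v2, v3] [True, True, True]"
proof -
  define d where "d = v2 - v1"
  have "d \<noteq> 0" using equilateral_ccw_third_vertex(2)[OF assms] by (simp add: d_def)
  have v2: "v2 = d + v1" by (simp add: d_def)
  have v3: "v3 = (1 - omega) * d + v1"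
    using equilateral_ccw_third_vertex(1)[OF assms] by (simp add: d_def diff_eq_eq)
  have edges: "edge [v1, v2, v3] 0 = d" "edge [v1, v2, v3] (Suc 0) = - (omega * d)"
    "edge [v1, v2, v3] (Suc (Suc 0)) = (omega - 1) * d"
    by (simp_all add: edge_def v2 v3 algebra_simps)
  have "omega * (omega * d) = (omega * omega) * d"
    "- (omega * ((omega - 1) * d)) = (omega - omega * omega) * d"
    by (simp_all add: algebra_simps)
  then have turns: "omega * (omega * d) = (omega - 1) * d" "- (omega * ((omega - 1) * d)) = d"
    by (simp_all add: omega_squared)
  have "omega \<noteq> 0" "omega \<noteq> 1" by (simp_all add: omega_eq complex_eq_iff)
  have "edge [v1, v2, v3] i \<noteq> 0 \<and>
      edge [v1, v2, v3] ((i + 1) mod 3) = turn ([True, True, True] ! ((i + 1) mod 3)) * edge [v1, v2, v3] i"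
    if i: "i < 3" for i
  proof -
    consider "i = 0" | "i = Suc 0" | "i = Suc (Suc 0)" using i by force
    then show ?thesis
      by cases (use \<open>d \<noteq> 0\<close> \<open>omega \<noteq> 0\<close> \<open>omega \<noteq> 1\<close> in \<open>simp_all add: edges turns turn_def\<close>)
  qed
  then show ?thesis by (simp add: turns_by_def)
qed

lemma turns_by_koch_list:
  assumes "equilateral_ccw v1 v2 v3"
  shows "turns_by (koch_list v1 v2 v3 (Suc d)) (sharp_flags d)"
  by (induction d) (simp_all add: turns_by_equilateral[OF assms] turns_by_koch_step)

lemma length_koch_list:
  assumes "equilateral_ccw v1 v2 v3"
  shows "length (koch_list v1 v2 v3 (Suc d)) = 3 * 4 ^ d"
  using turns_by_koch_list[OF assms, of d] by (simp add: turns_by_def)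

section \<open>Vertex angles and affine curvatures\<close>

lemma cyc_succ_diff:
  assumes "vs \<noteq> []"
  shows "cyc vs (k + 1) - cyc vs k = edge vs (nat ((k - 1) mod int (length vs)))"
  using Suc_nat_mod_pred[of "length vs" k] assms by (simp add: cyc_def edge_def)

lemma cyc_turn:
  assumes "turns_by vs fl"
  shows "cyc vs (k + 1) - cyc vs k \<noteq> 0"
    and "cyc vs (k + 1) - cyc vs k
      = turn (fl ! nat ((k - 1) mod int (length vs))) * (cyc vs k - cyc vs (k - 1))"
proof -
  let ?N = "length vs"
  define j j' where "j = nat ((k - 1) mod int ?N)" and "j' = nat ((k - 1 - 1) mod int ?N)"
  have "vs \<noteq> []" using assms by (simp add: turns_by_def)
  then have "j' < ?N" and succ: "Suc j' mod ?N = j"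
    using Suc_nat_mod_pred[of ?N "k - 1"] by (simp_all add: j_def j'_def nat_less_iff)
  have "edge vs j \<noteq> 0" and turn: "edge vs j = turn (fl ! j) * edge vs j'"
    using turns_byD[OF assms \<open>j' < ?N\<close>] by (simp_all add: succ)
  have "cyc vs (k + 1) - cyc vs k = edge vs j"
    using cyc_succ_diff[OF \<open>vs \<noteq> []\<close>] by (simp add: j_def)
  moreover have "cyc vs k - cyc vs (k - 1) = edge vs j'"
    using cyc_succ_diff[OF \<open>vs \<noteq> []\<close>, of "k - 1"] by (simp add: j'_def)
  ultimately show "cyc vs (k + 1) - cyc vs k \<noteq> 0"
    and "cyc vs (k + 1) - cyc vs k
      = turn (fl ! nat ((k - 1) mod int (length vs))) * (cyc vs k - cyc vs (k - 1))"
    using \<open>edge vs j \<noteq> 0\<close> turn by (simp_all flip: j_def)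
qed

lemma inner_mult_right_self: "x \<bullet> (c * x) = (cmod x)\<^sup>2 * Re c"
  by (simp only: cmod_power2) (simp add: inner_complex_def algebra_simps power2_eq_square)

lemma angle3_turn:
  assumes "e \<noteq> 0"
  shows "angle3 (b - e) b (b + turn t * e) = (if t then pi / 3 else 2 * pi / 3)"
proof -
  have "(b - e - b) \<bullet> (b + turn t * e - b) / (cmod (b - e - b) * cmod (b + turn t * e - b))
      = - Re (turn t)"
    using assms by (simp add: inner_mult_right_self norm_mult power2_eq_square)
  then show ?thesis by (simp add: angle3_def Re_turn)
qed

lemma sharp_iff_sharp_flags:
  assumes "equilateral_ccw v1 v2 v3"
  shows "sharp v1 v2 v3 (Suc d) i \<longleftrightarrow> sharp_flags d ! nat ((i - 1) mod int (3 * 4 ^ d))"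
proof -
  let ?vs = "koch_list v1 v2 v3 (Suc d)"
  let ?b = "sharp_flags d ! nat ((i - 1) mod int (3 * 4 ^ d))"
  have T: "turns_by ?vs (sharp_flags d)" by (rule turns_by_koch_list[OF assms])
  define e where "e = cyc ?vs i - cyc ?vs (i - 1)"
  have "e \<noteq> 0" using cyc_turn(1)[OF T, of "i - 1"] by (simp add: e_def)
  have prev: "cyc ?vs (i - 1) = cyc ?vs i - e" by (simp add: e_def)
  have succ: "cyc ?vs (i + 1) = cyc ?vs i + turn ?b * e"
    using cyc_turn(2)[OF T, of i] length_koch_list[OF assms] by (simp add: e_def algebra_simps)
  have "sharp v1 v2 v3 (Suc d) i \<longleftrightarrow> (if ?b then pi / 3 else 2 * pi / 3) = pi / 3"
    unfolding sharp_def koch_vertex_def prev succ angle3_turn[OF \<open>e \<noteq> 0\<close>] ..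
  then show ?thesis by auto
qed

lemma inv_affine_id: "inv_affine id"
  unfolding inv_affine_def by (intro exI[of _ id] exI[of _ 0]) (auto simp: linear_id)

lemma det2_linear:
  assumes "linear L"
  shows "det2 (L x) (L y) = det2 (L 1) (L \<i>) * det2 x y"
proof -
  have coords: "L z = Re z *\<^sub>R L 1 + Im z *\<^sub>R L \<i>" for z
  proof -
    have "z = Re z *\<^sub>R 1 + Im z *\<^sub>R \<i>" by (simp add: complex_eq_iff)
    then show ?thesis by (metis assms linear_add linear_scale)
  qed
  show ?thesis unfolding coords[of x] coords[of y] by (simp add: det2_def algebra_simps)
qed

lemma det2_linear_factor_nonzero:
  assumes "linear L" "surj L"
  shows "det2 (L 1) (L \<i>) \<noteq> 0"
proof -
  obtain x y where "L x = 1" "L y = \<i>" using assms(2) by (metis surjD)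
  then have "det2 (L 1) (L \<i>) * det2 x y = 1"
    using det2_linear[OF assms(1), of x y] by (simp add: det2_def)
  then show ?thesis by auto
qed

text \<open>\<open>\<delta>\<close> stands for the determinant of the linear part of an affine map; it cancels in every ratio.\<close>

lemma curvature_ratios_of_turns:
  assumes "e \<noteq> 0" "\<delta> \<noteq> 0"
  shows "\<delta> * det2 e (turn a * e) \<noteq> 0"
    and "\<delta> * det2 (turn a * e) (turn b * (turn a * e)) / (\<delta> * det2 e (turn a * e))
      = (if a = b then 1 else -1)"
    and "\<delta> * det2 e (turn b * (turn a * e)) / (\<delta> * det2 e (turn a * e)) = (if b then -1 else 1)"
proof -
  have "(cmod e)\<^sup>2 > 0" using assms by simp
  have d1: "det2 e (turn a * e) = (cmod e)\<^sup>2 * Im (turn a)" by (rule det2_mult_right_self)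
  have d2: "det2 (turn a * e) (turn b * (turn a * e)) = (cmod e)\<^sup>2 * Im (turn b)"
    using det2_mult_right_self[of "turn a * e" "turn b"] by (simp add: norm_mult)
  have d3: "det2 e (turn b * (turn a * e)) = (cmod e)\<^sup>2 * Im (turn b * turn a)"
    using det2_mult_right_self[of e "turn b * turn a"] by (simp add: mult.assoc)
  show "\<delta> * det2 e (turn a * e) \<noteq> 0"
    unfolding d1 Im_turn using assms \<open>(cmod e)\<^sup>2 > 0\<close> by simp
  show "\<delta> * det2 (turn a * e) (turn b * (turn a * e)) / (\<delta> * det2 e (turn a * e))
      = (if a = b then 1 else -1)"
    unfolding d1 d2 Im_turn using assms \<open>(cmod e)\<^sup>2 > 0\<close> by (cases a; cases b; simp)
  show "\<delta> * det2 e (turn b * (turn a * e)) / (\<delta> * det2 e (turn a * e)) = (if b then -1 else 1)"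
    unfolding d1 d3 Im_turn Im_turn_mult using assms \<open>(cmod e)\<^sup>2 > 0\<close> by (cases a; cases b; simp)
qed

lemma koch_affine_curvatures:
  fixes d :: nat and k :: int
  assumes "equilateral_ccw v1 v2 v3" and "inv_affine f"
  defines "P \<equiv> \<lambda>i. f (koch_vertex v1 v2 v3 (Suc d) i)"
    and "\<sigma> \<equiv> sharp v1 v2 v3 (Suc d)"
  shows "curv_defined P k \<and> kappa P k = (if \<sigma> k = \<sigma> (k + 1) then 1 else -1)
    \<and> kappa_bar P k = (if \<sigma> (k + 1) then -1 else 1)"
proof -
  let ?vs = "koch_list v1 v2 v3 (Suc d)"
  have T: "turns_by ?vs (sharp_flags d)" by (rule turns_by_koch_list[OF assms(1)])
  obtain L c where L: "linear L" "bij L" and f: "f = (\<lambda>x. L x + c)"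
    using assms(2) unfolding inv_affine_def by blast
  define \<delta> where "\<delta> = det2 (L 1) (L \<i>)"
  have "\<delta> \<noteq> 0" unfolding \<delta>_def using L by (intro det2_linear_factor_nonzero) (auto simp: bij_def)
  define E where "E = (\<lambda>k. cyc ?vs (k + 1) - cyc ?vs k)"
  have tvec: "tvec P j = L (E j)" for j
    by (simp add: tvec_def P_def f koch_vertex_def E_def linear_diff[OF L(1)])
  have det: "det2 (tvec P a) (tvec P b) = \<delta> * det2 (E a) (E b)" for a b
    unfolding tvec \<delta>_def by (rule det2_linear[OF L(1)])
  have flag: "\<sigma> j = sharp_flags d ! nat ((j - 1) mod int (length ?vs))" for j
    using sharp_iff_sharp_flags[OF assms(1)] length_koch_list[OF assms(1)] by (simp add: \<sigma>_def)
  define e where "e = E (k - 1)"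
  have "e \<noteq> 0" using cyc_turn(1)[OF T, of "k - 1"] by (simp add: e_def E_def)
  have turnE: "E j = turn (\<sigma> j) * E (j - 1)" for j
    using cyc_turn(2)[OF T, of j] by (simp add: E_def flag)
  have Ek: "E k = turn (\<sigma> k) * e" and Ek1: "E (k + 1) = turn (\<sigma> (k + 1)) * (turn (\<sigma> k) * e)"
    using turnE[of k] turnE[of "k + 1"] by (simp_all add: e_def)
  show ?thesis
    unfolding curv_defined_def kappa_def kappa_bar_def det e_def[symmetric] Ek Ek1
    using curvature_ratios_of_turns(1)[OF \<open>e \<noteq> 0\<close> \<open>\<delta> \<noteq> 0\<close>, of "\<sigma> k"]
      curvature_ratios_of_turns(2,3)[OF \<open>e \<noteq> 0\<close> \<open>\<delta> \<noteq> 0\<close>,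
        where a = "\<sigma> k" and b = "\<sigma> (k + 1)"]
    by blast
qed

section \<open>Sharp points and the snowflake code\<close>

lemma koch_sharp_points:
  assumes "equilateral_ccw v1 v2 v3" "n \<ge> 2" "1 \<le> m" "m \<le> 3 * 4 ^ (n - 1)"
  shows "sharp v1 v2 v3 n (int m) \<longleftrightarrow>
    (\<exists>l k. l \<le> n - 2 \<and> 1 \<le> k \<and> k \<le> 3 * 4 ^ (n - 2 - l) \<and> m = 4 ^ l * (4 * k - 2) + 1)
    \<or> (\<exists>k\<in>{1, 2, 3}. m = 4 ^ (n - 1) * (k - 1) + 1)"
proof -
  obtain d where n: "n = Suc (Suc d)" using assms(2) by (metis add_2_eq_Suc le_Suc_ex)
  define x where "x = m - 1"
  have m: "m = x + 1" and x: "x < 3 * 4 ^ Suc d" using assms(3,4) by (simp_all add: x_def n)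
  have "int x mod int (3 * 4 ^ Suc d) = int x"
    using x by (intro mod_pos_pos_trivial) (simp_all only: of_nat_less_iff of_nat_0_le_iff)
  then have "sharp v1 v2 v3 n (int m) \<longleftrightarrow> sharp_flags (Suc d) ! x"
    using sharp_iff_sharp_flags[OF assms(1), of "Suc d" "int m"] by (simp add: n m)
  then show ?thesis
    unfolding sharp_flags_iff[OF x] exists_scaled_4k2_iff[OF x] power_dvd_iff_small_multiple[OF x]
    by (simp add: n m)
qed

lemma koch_even_vertex_not_sharp:
  assumes "equilateral_ccw v1 v2 v3" "even k"
  shows "\<not> sharp v1 v2 v3 (Suc (Suc d)) k"
proof -
  have "odd (nat ((k - 1) mod int (3 * 4 ^ Suc d)))"
    using assms(2) by (intro odd_nat_mod_even) simp_all
  moreover have "nat ((k - 1) mod int (3 * 4 ^ Suc d)) < length (refine_flags (sharp_flags d))"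
    by (simp add: nat_less_iff)
  ultimately show ?thesis
    using refine_flags_odd sharp_iff_sharp_flags[OF assms(1)] by simp
qed

lemma koch_code_pair_curvatures:
  fixes d :: nat and j :: int
  assumes "equilateral_ccw v1 v2 v3" "inv_affine f"
  defines "P \<equiv> \<lambda>i. f (koch_vertex v1 v2 v3 (Suc (Suc d)) i)"
    and "s \<equiv> sharp v1 v2 v3 (Suc (Suc d)) (2 * j - 1)"
  shows "curv_defined P (2 * j - 2) \<and> curv_defined P (2 * j - 1)
    \<and> kappa P (2 * j - 2) = (if s then -1 else 1) \<and> kappa P (2 * j - 1) = (if s then -1 else 1)
    \<and> kappa_bar P (2 * j - 2) = (if s then -1 else 1) \<and> kappa_bar P (2 * j - 1) = 1"
proof -
  have "\<not> sharp v1 v2 v3 (Suc (Suc d)) (2 * j - 2)" "\<not> sharp v1 v2 v3 (Suc (Suc d)) (2 * j)"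
    by (intro koch_even_vertex_not_sharp[OF assms(1)]; simp)+
  moreover have "2 * j - 2 + 1 = 2 * j - 1" "2 * j - 1 + 1 = 2 * j" by simp_all
  ultimately show ?thesis
    using koch_affine_curvatures[OF assms(1,2), of "Suc d" "2 * j - 2"]
      koch_affine_curvatures[OF assms(1,2), of "Suc d" "2 * j - 1"]
    unfolding P_def s_def by auto
qed

lemma snowflake_code_eq_even_letters:
  assumes "equilateral_ccw v1 v2 v3"
  shows "snowflake_code v1 v2 v3 (Suc (Suc d)) = even_letters (sharp_flags (Suc d))"
proof (rule nth_equalityI)
  show "length (snowflake_code v1 v2 v3 (Suc (Suc d))) = length (even_letters (sharp_flags (Suc d)))"
    by (simp add: snowflake_code_def length_even_letters)
next
  fix p
  assume "p < length (snowflake_code v1 v2 v3 (Suc (Suc d)))"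
  then have p: "p < 6 * 4 ^ d" by (simp add: snowflake_code_def)
  then have "2 * p < 3 * 4 ^ Suc d" by simp
  then have "int (2 * p) mod int (3 * 4 ^ Suc d) = int (2 * p)"
    by (intro mod_pos_pos_trivial) (simp_all only: of_nat_less_iff of_nat_0_le_iff)
  moreover have "2 * int (Suc p) - 1 - 1 = int (2 * p)" by simp
  ultimately have idx: "(2 * int (Suc p) - 1 - 1) mod int (3 * 4 ^ Suc d) = int (2 * p)" by simp
  have "sharp v1 v2 v3 (Suc (Suc d)) (2 * int (Suc p) - 1) \<longleftrightarrow> sharp_flags (Suc d) ! (2 * p)"
    unfolding sharp_iff_sharp_flags[OF assms] idx nat_int ..
  then show "snowflake_code v1 v2 v3 (Suc (Suc d)) ! p = even_letters (sharp_flags (Suc d)) ! p"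
    using p by (simp add: snowflake_code_def nth_even_letters del: upt_Suc)
qed

lemma snowflake_code_two:
  assumes "equilateral_ccw v1 v2 v3"
  shows "snowflake_code v1 v2 v3 2 = [1, 1, 1, 1, 1, 1]"
  using snowflake_code_eq_even_letters[OF assms, of 0]
  by (simp add: numeral_2_eq_2 refine_flags_def)

lemma snowflake_code_Suc:
  assumes "equilateral_ccw v1 v2 v3" "n \<ge> 2"
  shows "snowflake_code v1 v2 v3 (Suc n) = concat (map (\<lambda>c. [c, 1, 0, 1]) (snowflake_code v1 v2 v3 n))"
proof -
  obtain d where "n = Suc (Suc d)" using assms(2) by (metis add_2_eq_Suc le_Suc_ex)
  then show ?thesis
    using even_letters_refine_flags_twice[of "sharp_flags d"]
    by (simp add: snowflake_code_eq_even_letters[OF assms(1)])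
qed

lemma nth_snowflake_code:
  assumes "1 \<le> j" "j \<le> length (snowflake_code v1 v2 v3 n)"
  shows "snowflake_code v1 v2 v3 n ! (j - 1) = of_bool (sharp v1 v2 v3 n (2 * int j - 1))"
  using assms by (simp add: snowflake_code_def nth_upt del: upt_Suc)

lemma snowflake_code_curvatures:
  fixes j :: nat
  assumes "equilateral_ccw v1 v2 v3" "inv_affine f" "n \<ge> 2"
    and "1 \<le> j" "j \<le> length (snowflake_code v1 v2 v3 n)"
  defines "P \<equiv> \<lambda>i. f (koch_vertex v1 v2 v3 n i)" and "c \<equiv> snowflake_code v1 v2 v3 n ! (j - 1)"
  shows "curv_defined P (2 * int j - 2) \<and> curv_defined P (2 * int j - 1)
    \<and> kappa P (2 * int j - 2) = (if c = 1 then -1 else 1)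
    \<and> kappa P (2 * int j - 1) = (if c = 1 then -1 else 1)
    \<and> kappa_bar P (2 * int j - 2) = (if c = 1 then -1 else 1) \<and> kappa_bar P (2 * int j - 1) = 1"
proof -
  obtain d where n: "n = Suc (Suc d)" using assms(3) by (metis add_2_eq_Suc le_Suc_ex)
  have "c = 1 \<longleftrightarrow> sharp v1 v2 v3 n (2 * int j - 1)"
    using nth_snowflake_code[OF assms(4,5)] by (simp add: c_def)
  then show ?thesis
    using koch_code_pair_curvatures[OF assms(1,2), of d "int j"] by (simp add: P_def n)
qed

theorem mainTheorem6:
  fixes v1 v2 v3 :: complex
  assumes tri: "equilateral_ccw v1 v2 v3"
  shows
    "(\<forall>n\<ge>2. \<forall>m::nat. 1 \<le> m \<and> m \<le> 3 * 4 ^ (n - 1) \<longrightarrow>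
        (sharp v1 v2 v3 n (int m) \<longleftrightarrow>
          (\<exists>l k. l \<le> n - 2 \<and> 1 \<le> k \<and> k \<le> 3 * 4 ^ (n - 2 - l) \<and> m = 4 ^ l * (4 * k - 2) + 1)
          \<or> (\<exists>k\<in>{1, 2, 3}. m = 4 ^ (n - 1) * (k - 1) + 1)))
     \<and> (\<forall>n\<ge>2. \<forall>f. f = id \<or> inv_affine f \<longrightarrow>
          (let P = (\<lambda>i. f (koch_vertex v1 v2 v3 n i)); u = snowflake_code v1 v2 v3 n in
           \<forall>j::nat. 1 \<le> j \<and> j \<le> length u \<longrightarrow>
             (u ! (j - 1) = 1 \<longrightarrow>
                curv_defined P (2 * int j - 2) \<and> curv_defined P (2 * int j - 1)
                \<and> kappa P (2 * int j - 2) = -1 \<and> kappa P (2 * int j - 1) = -1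
                \<and> kappa_bar P (2 * int j - 2) = -1 \<and> kappa_bar P (2 * int j - 1) = 1)
             \<and> (u ! (j - 1) = 0 \<longrightarrow>
                curv_defined P (2 * int j - 2) \<and> curv_defined P (2 * int j - 1)
                \<and> kappa P (2 * int j - 2) = 1 \<and> kappa P (2 * int j - 1) = 1
                \<and> kappa_bar P (2 * int j - 2) = 1 \<and> kappa_bar P (2 * int j - 1) = 1)))
     \<and> snowflake_code v1 v2 v3 2 = [1, 1, 1, 1, 1, 1]
     \<and> (\<forall>n\<ge>2. snowflake_code v1 v2 v3 (Suc n)
              = concat (map (\<lambda>c. [c, 1, 0, 1]) (snowflake_code v1 v2 v3 n)))
     \<and> snowflake_code v1 v2 v3 3 = concat (replicate 6 [1, 1, 0, 1])
     \<and> (\<forall>n\<ge>2. length (snowflake_code v1 v2 v3 n) = 6 * 4 ^ (n - 2))"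
proof -
  have code3: "snowflake_code v1 v2 v3 3 = concat (replicate 6 [1, 1, 0, 1])"
    using snowflake_code_Suc[OF tri, of 2] snowflake_code_two[OF tri] by (simp add: numeral_eq_Suc)
  have affine: "inv_affine f" if "f = id \<or> inv_affine f" for f :: "complex \<Rightarrow> complex"
    using that inv_affine_id by blast
  show ?thesis
    using koch_sharp_points[OF tri] snowflake_code_curvatures[OF tri affine]
      snowflake_code_two[OF tri] snowflake_code_Suc[OF tri] code3
    by (simp add: Let_def) (simp add: snowflake_code_def)
qed

end
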